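(* Let $n>d\geq 1$ and let $\Phi$ be a real, additive gain graph on vertex set $V=\{1,\dots,n\}$ with edge set $E$. Then there is an open dense subset $\mathcal{G}\subseteq(\mathbb{E}^d)^n$ of $n$-tuples of distinct points such that for every $\mathbf{Q}=(Q_1,\dots,Q_n)\in\mathcal{G}$, writing $\mathcal{H}=\mathcal{H}(\Phi;\mathbf{Q})$, the following hold. (a) For every edge set $S\subseteq E$, writing $c(S)=n-m$, the intersection $\bigcap_{e\in S}h(e)$ is empty if $S$ is unbalanced or if $m>d$; otherwise it is a nonempty affine flat of dimension $d-m$. (b) For edge sets $S_1,S_2\subseteq E$, the intersections $\bigcap_{e\in S_1}h(e)$ and $\bigcap_{e\in S_2}h(e)$ are equal and nonempty if and only if $S_1\cup S_2$ is balanced and the connected components of $(V,S_1)$ and of $(V,S_2)$ partition $V$ in the same way, into at least $n-d$ parts.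
   Context: $\mathbb{E}^d$ is Euclidean $d$-space with distance $d(\cdot,\cdot)$. For points $Q_i,Q_j$ the Pythagorean coordinate of a point $P$ is $\psi_{ij}(P)=d(P,Q_i)^2-d(P,Q_j)^2$; if $Q_i\neq Q_j$, each level set $\{\psi_{ij}=c\}$ is a hyperplane perpendicular to the line $Q_iQ_j$. A real, additive gain graph $\Phi$ on vertex set $V=\{1,\dots,n\}$ consists of a finite graph with edge set $E$ (multiple edges allowed; every edge has two distinct endpoints) together with a gain function assigning to each edge $e$ with endpoints $i,j$ a real number $\phi(e;i,j)$, where $\phi(e;j,i)=-\phi(e;i,j)$. An edge set $S\subseteq E$ is balanced if for every circle (simple closed path) contained in $S$ the sum of the gains of its edges, read in a consistent direction around the circle, is $0$. $c(S)$ denotes the number of connected components of the spanning subgraph $(V,S)$, isolated vertices counting as components. For $\mathbf{Q}=(Q_1,\dots,Q_n)\in(\mathbb{E}^d)^n$ with $Q_i\neq Q_j$ whenever $i,j$ are adjacent, the Pythagorean arrangement $\mathcal{H}(\Phi;\mathbf{Q})$ consists of the hyperplanes $h(e)=\{P\in\mathbb{E}^d:\psi_{ij}(P)=\phi(e;i,j)\}$, one for each edge $e$ with endpoints $i,j$. The intersection over the empty edge set is $\mathbb{E}^d$. *)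

theory Defs
  imports "HOL-Analysis.Analysis"
begin

text \<open>A real additive gain graph: edges of type 'e (edge set E), each edge e has
  endpoints src e and tgt e (distinct), and gain phi e = phi(e; src e, tgt e).
  Vertices are the elements of the finite type 'n (playing the role of {1..n}).\<close>

definition oriented_gain ::
  "('e \<Rightarrow> 'n) \<Rightarrow> ('e \<Rightarrow> 'n) \<Rightarrow> ('e \<Rightarrow> real) \<Rightarrow> 'e \<Rightarrow> 'n \<Rightarrow> 'n \<Rightarrow> real" where
  "oriented_gain src tgt phi e i j = (if src e = i \<and> tgt e = j then phi e else - phi e)"

definition is_circle ::
  "('e \<Rightarrow> 'n) \<Rightarrow> ('e \<Rightarrow> 'n) \<Rightarrow> 'e set \<Rightarrow> 'n list \<Rightarrow> 'e list \<Rightarrow> bool" where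
  "is_circle src tgt S vs es \<longleftrightarrow>
     length vs = length es \<and> 2 \<le> length es \<and> distinct vs \<and> distinct es \<and> set es \<subseteq> S \<and>
     (\<forall>i<length es. {src (es!i), tgt (es!i)} = {vs!i, vs!((i+1) mod length vs)})"

definition balanced ::
  "('e \<Rightarrow> 'n) \<Rightarrow> ('e \<Rightarrow> 'n) \<Rightarrow> ('e \<Rightarrow> real) \<Rightarrow> 'e set \<Rightarrow> bool" where
  "balanced src tgt phi S \<longleftrightarrow>
     (\<forall>vs es. is_circle src tgt S vs es \<longrightarrow>
        (\<Sum>i<length es. oriented_gain src tgt phi (es!i) (vs!i) (vs!((i+1) mod length vs))) = 0)"

definition conn_rel :: "('e \<Rightarrow> 'n) \<Rightarrow> ('e \<Rightarrow> 'n) \<Rightarrow> 'e set \<Rightarrow> ('n \<times> 'n) set" where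
  "conn_rel src tgt S = ({(src e, tgt e) | e. e \<in> S} \<union> {(tgt e, src e) | e. e \<in> S})\<^sup>*"

definition components :: "('e \<Rightarrow> 'n) \<Rightarrow> ('e \<Rightarrow> 'n) \<Rightarrow> 'e set \<Rightarrow> 'n set set" where
  "components src tgt S = (UNIV :: 'n set) // conn_rel src tgt S"

definition ncomp :: "('e \<Rightarrow> 'n) \<Rightarrow> ('e \<Rightarrow> 'n) \<Rightarrow> 'e set \<Rightarrow> nat" where
  "ncomp src tgt S = card (components src tgt S)"

definition pyth :: "'a::euclidean_space \<Rightarrow> 'a \<Rightarrow> 'a \<Rightarrow> real" where
  "pyth Qi Qj P = (dist P Qi)\<^sup>2 - (dist P Qj)\<^sup>2"

definition hyp :: "('e \<Rightarrow> 'n::finite) \<Rightarrow> ('e \<Rightarrow> 'n) \<Rightarrow> ('e \<Rightarrow> real) \<Rightarrow> ('a::euclidean_space)^'n \<Rightarrow> 'e \<Rightarrow> 'a set" where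
  "hyp src tgt phi Q e = {P. pyth (Q $ src e) (Q $ tgt e) P = phi e}"

definition inter_hyp :: "('e \<Rightarrow> 'n::finite) \<Rightarrow> ('e \<Rightarrow> 'n) \<Rightarrow> ('e \<Rightarrow> real) \<Rightarrow> ('a::euclidean_space)^'n \<Rightarrow> 'e set \<Rightarrow> 'a set" where
  "inter_hyp src tgt phi Q S = (\<Inter>e\<in>S. hyp src tgt phi Q e)"

end

theory Submission
  imports Defs
begin

text \<open>
  An edge set is balanced iff its gains come from a potential, \<open>\<phi>(e;i,j) = p i - p j\<close>.
  Then P lies on all hyperplanes of S iff \<open>|P - Q\<^sub>i|\<^sup>2 - p i\<close> is constant on the components
  of S, i.e. iff \<open>(2P, -1)\<close> is orthogonal to \<open>w\<^sub>i - w\<^bsub>r i\<^esub>\<close> for all i, where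
  \<open>w\<^sub>i = (Q\<^sub>i, |Q\<^sub>i|\<^sup>2 - p i)\<close> lifts \<open>Q\<^sub>i\<close> to a paraboloid in \<open>\<real>\<^sup>d \<times> \<real>\<close> and
  \<open>r i\<close> is a fixed representative of the component of i; this gives \<open>n - c(S)\<close> equations.
  For generic Q any at most d differences \<open>Q\<^sub>i - Q\<^bsub>r i\<^esub>\<close> are linearly independent, so the
  solutions form a flat of dimension \<open>d - (n - c(S))\<close>; and any d + 1 lifted differences span
  \<open>\<real>\<^sup>d \<times> \<real>\<close>, so no \<open>(2P, -1) \<noteq> 0\<close> is orthogonal to all of them and the intersection
  is empty when \<open>n - c(S) > d\<close>. Each independence condition is open, and dense because moving
  one point at a time escapes a proper subspace; finitely many conditions suffice. In (b), equal
  nonempty flats have equal dimension, so \<open>c(S\<^sub>1) = c(S\<^sub>1 \<union> S\<^sub>2) = c(S\<^sub>2)\<close>, and a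
  partition refining another one with the same number of blocks equals it.
\<close>

section \<open>Representatives of equivalence classes\<close>

definition class_rep :: "('a \<times> 'a) set \<Rightarrow> 'a \<Rightarrow> 'a" where
  "class_rep R i = (SOME j. (i, j) \<in> R)"

lemma class_rep_rel:
  assumes "equiv UNIV R" shows "(i, class_rep R i) \<in> R"
proof -
  have "(i, i) \<in> R" using assms by (simp add: equiv_def refl_on_def)
  then show ?thesis unfolding class_rep_def by (rule someI)
qed

lemma class_rep_eq:
  assumes "equiv UNIV R" "(i, j) \<in> R" shows "class_rep R i = class_rep R j"
proof -
  have "R `` {i} = R `` {j}" using assms by (rule equiv_class_eq)
  then have "(\<lambda>k. (i, k) \<in> R) = (\<lambda>k. (j, k) \<in> R)" by (auto simp: set_eq_iff)
  then show ?thesis unfolding class_rep_def by (rule arg_cong)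
qed

lemma class_rep_idem: "equiv UNIV R \<Longrightarrow> class_rep R (class_rep R i) = class_rep R i"
  by (metis class_rep_eq class_rep_rel)

lemma card_class_reps:
  fixes R :: "('a::finite \<times> 'a) set"
  assumes "equiv UNIV R"
  shows "card {i. class_rep R i = i} = card (UNIV // R)"
proof -
  have "bij_betw (\<lambda>i. R `` {i}) {i. class_rep R i = i} (UNIV // R)"
  proof (rule bij_betwI')
    fix i j assume "i \<in> {i. class_rep R i = i}" "j \<in> {i. class_rep R i = i}"
    moreover have "(i, j) \<in> R" if "R `` {i} = R `` {j}"
      using that assms by (simp add: eq_equiv_class_iff)
    ultimately show "(R `` {i} = R `` {j}) = (i = j)"
      using class_rep_eq[OF assms, of i j] by force
  next
    fix C assume "C \<in> UNIV // R"
    then obtain i where "C = R `` {i}" by (auto elim: quotientE)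
    moreover have "R `` {i} = R `` {class_rep R i}"
      using assms class_rep_rel[OF assms] by (rule equiv_class_eq)
    ultimately show "\<exists>j\<in>{i. class_rep R i = i}. C = R `` {j}"
      using class_rep_idem[OF assms] by blast
  qed (simp add: quotientI)
  then show ?thesis by (rule bij_betw_same_card)
qed

lemma card_non_class_reps:
  fixes R :: "('a::finite \<times> 'a) set"
  assumes "equiv UNIV R"
  shows "card {i. class_rep R i \<noteq> i} = CARD('a) - card (UNIV // R)"
proof -
  have "{i. class_rep R i \<noteq> i} = UNIV - {i. class_rep R i = i}" by blast
  then show ?thesis by (simp add: card_Diff_subset card_class_reps[OF assms])
qed

lemma equiv_eq_if_refines_card_eq:
  fixes R S :: "('a::finite \<times> 'a) set"
  assumes "equiv UNIV R" "equiv UNIV S" "R \<subseteq> S" "card (UNIV // R) = card (UNIV // S)"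
  shows "R = S"
proof -
  let ?g = "\<lambda>C. S `` C"
  have "?g ` (UNIV // R) = UNIV // S" using assms by (intro refines_equiv_image_eq)
  then have inj: "inj_on ?g (UNIV // R)"
    by (intro eq_card_imp_inj_on) (simp_all add: assms(4))
  have "(x, y) \<in> R" if "(x, y) \<in> S" for x y
  proof -
    have "?g (R `` {x}) = ?g (R `` {y})"
      using refines_equiv_class_eq2[OF assms(3,1,2)] equiv_class_eq[OF assms(2) that] by simp
    then have "R `` {x} = R `` {y}" using inj_onD[OF inj _ quotientI quotientI] by blast
    then show ?thesis using assms(1) by (simp add: eq_equiv_class_iff)
  qed
  then show ?thesis using assms(3) by auto
qed

lemma equiv_eq_iff_quotient_eq:
  assumes "equiv A R" "equiv A S" shows "A // R = A // S \<longleftrightarrow> R = S"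
proof
  have sub: "R \<subseteq> S" if "equiv A R" "equiv A S" "A // R = A // S" for R S
  proof (rule subrelI)
    fix x y assume xy: "(x, y) \<in> R"
    then have "x \<in> A" using that(1) by (auto dest: equiv_type)
    then have "R `` {x} \<in> A // S" "{x, y} \<subseteq> R `` {x}"
      using that xy equiv_class_self[OF that(1)] by (auto intro: quotientI)
    then show "(x, y) \<in> S" using in_quotient_imp_in_rel[OF that(2)] by blast
  qed
  assume "A // R = A // S"
  then show "R = S" using sub[OF assms] sub[OF assms(2,1)] by auto
qed simp

section \<open>Components, potentials and balance\<close>

lemma equiv_conn_rel: "equiv UNIV (conn_rel src tgt S)"
proof -
  let ?R = "{(src e, tgt e) | e. e \<in> S} \<union> {(tgt e, src e) | e. e \<in> S}"
  have "sym ?R" unfolding sym_def by blast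
  then show ?thesis
    unfolding conn_rel_def equiv_def by (auto simp: refl_on_def sym_rtrancl trans_rtrancl)
qed

lemma conn_rel_edge: "e \<in> S \<Longrightarrow> (src e, tgt e) \<in> conn_rel src tgt S"
  unfolding conn_rel_def by blast

lemma conn_rel_mono: "S \<subseteq> T \<Longrightarrow> conn_rel src tgt S \<subseteq> conn_rel src tgt T"
  unfolding conn_rel_def by (rule rtrancl_mono) blast

lemma conn_rel_invariant:
  assumes "\<And>e. e \<in> S \<Longrightarrow> f (src e) = f (tgt e)" "(i, j) \<in> conn_rel src tgt S"
  shows "f i = f j"
  using assms(2) unfolding conn_rel_def
proof (induction rule: rtrancl_induct)
  case (step y z) then show ?case using assms(1) by force
qed simp

lemma edge_invariant_iff_class_rep_invariant:
  "(\<forall>e\<in>S. f (src e) = f (tgt e)) \<longleftrightarrow> (\<forall>i. f (class_rep (conn_rel src tgt S) i) = f i)"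
proof (intro iffI allI ballI)
  fix i assume "\<forall>e\<in>S. f (src e) = f (tgt e)"
  then show "f (class_rep (conn_rel src tgt S) i) = f i"
    using conn_rel_invariant[of S f, OF _ class_rep_rel[OF equiv_conn_rel]] by metis
next
  fix e assume "\<forall>i. f (class_rep (conn_rel src tgt S) i) = f i" "e \<in> S"
  then show "f (src e) = f (tgt e)"
    using class_rep_eq[OF equiv_conn_rel conn_rel_edge] by metis
qed

lemma card_non_class_reps_conn_rel:
  fixes src tgt :: "'e \<Rightarrow> 'n::finite"
  shows "card {i. class_rep (conn_rel src tgt S) i \<noteq> i} = CARD('n) - ncomp src tgt S"
  unfolding ncomp_def components_def by (simp add: card_non_class_reps equiv_conn_rel)

lemma ncomp_le_card:
  fixes src tgt :: "'e \<Rightarrow> 'n::finite"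
  shows "ncomp src tgt S \<le> CARD('n)"
proof -
  have "components src tgt S = range (\<lambda>i. conn_rel src tgt S `` {i})"
    unfolding components_def quotient_def by blast
  then show ?thesis unfolding ncomp_def by (simp add: card_image_le)
qed

lemma oriented_gain_potential:
  assumes "phi e = p (src e) - p (tgt e)" "{src e, tgt e} = {u, v}"
  shows "oriented_gain src tgt phi e u v = p u - p v"
  using assms unfolding oriented_gain_def by (auto simp: doubleton_eq_iff)

lemma sum_cyclic_differences:
  fixes k :: nat
  assumes "0 < k" shows "(\<Sum>i<k. g i - g ((i + 1) mod k)) = (0::real)"
proof -
  obtain m where k: "k = Suc m" using assms by (cases k) auto
  have "(\<Sum>i<m. g i - g ((i + 1) mod k)) = (\<Sum>i<m. g i - g (Suc i))"
    by (rule sum.cong) (auto simp: k)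
  also have "\<dots> = g 0 - g m" by (rule sum_lessThan_telescope')
  finally show ?thesis by (simp add: k)
qed

lemma balanced_if_potential:
  assumes "\<And>e. e \<in> S \<Longrightarrow> phi e = p (src e) - p (tgt e)"
  shows "balanced src tgt phi S"
  unfolding balanced_def
proof (intro allI impI)
  fix vs es assume c: "is_circle src tgt S vs es"
  let ?k = "length vs"
  have "(\<Sum>i<length es. oriented_gain src tgt phi (es!i) (vs!i) (vs!((i+1) mod ?k)))
      = (\<Sum>i<?k. p (vs!i) - p (vs!((i+1) mod ?k)))"
  proof (rule sum.cong)
    fix i assume "i \<in> {..<?k}"
    then show "oriented_gain src tgt phi (es!i) (vs!i) (vs!((i+1) mod ?k)) =
        p (vs!i) - p (vs!((i+1) mod ?k))"
      using c assms by (intro oriented_gain_potential) (auto simp: is_circle_def subset_iff)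
  qed (use c in \<open>simp add: is_circle_def\<close>)
  also have "\<dots> = 0" using c unfolding is_circle_def by (intro sum_cyclic_differences) auto
  finally show "(\<Sum>i<length es. oriented_gain src tgt phi (es!i) (vs!i) (vs!((i+1) mod ?k))) = 0" .
qed

lemma balanced_subset: "balanced src tgt phi T \<Longrightarrow> S \<subseteq> T \<Longrightarrow> balanced src tgt phi S"
  unfolding balanced_def is_circle_def by blast

lemma rtrancl_imp_distinct_path:
  assumes "(x, y) \<in> R\<^sup>*"
  shows "\<exists>vs. vs \<noteq> [] \<and> hd vs = x \<and> last vs = y \<and> distinct vs \<and>
           (\<forall>i. Suc i < length vs \<longrightarrow> (vs!i, vs!Suc i) \<in> R)"
  using assms
proof (induction rule: rtrancl_induct)
  case base
  show ?case by (rule exI[of _ "[x]"]) simp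
next
  case (step y z)
  then obtain vs where vs: "vs \<noteq> []" "hd vs = x" "last vs = y" "distinct vs"
    "\<forall>i. Suc i < length vs \<longrightarrow> (vs!i, vs!Suc i) \<in> R" by blast
  show ?case
  proof (cases "z \<in> set vs")
    case True
    then obtain j where j: "j < length vs" "vs!j = z" by (meson in_set_conv_nth)
    have "last (take (Suc j) vs) = z" using j by (simp add: take_Suc_conv_app_nth)
    moreover have "hd (take (Suc j) vs) = x" using vs(1,2) by simp
    ultimately show ?thesis
      using vs j by (intro exI[of _ "take (Suc j) vs"]) simp
  next
    case False
    have "(vs @ [z]) ! i = vs ! i" "(vs @ [z]) ! Suc i = (if Suc i < length vs then vs ! Suc i else z)"
      if "i < length vs" for i
      using that by (simp_all add: nth_append)
    moreover have "(vs ! i, z) \<in> R" if "Suc i = length vs" for i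
      using that vs(1,3) step(2) by (metis diff_Suc_1 last_conv_nth)
    ultimately show ?thesis
      using vs False by (intro exI[of _ "vs @ [z]"]) (auto simp: less_Suc_eq)
  qed
qed

lemma circle_closing_path:
  assumes vs: "distinct vs" "vs \<noteq> []" "hd vs = tgt e" "last vs = src e"
    and e: "src e \<noteq> tgt e" "e \<notin> F"
    and path: "\<And>i. Suc i < length vs \<Longrightarrow> \<exists>f\<in>F. {src f, tgt f} = {vs!i, vs!Suc i}"
  shows "\<exists>es. set es \<subseteq> F \<and> is_circle src tgt (insert e F) vs (es @ [e])"
proof -
  define k where "k = length vs - 1"
  have lvs: "length vs = Suc k" using vs(2) unfolding k_def by (cases vs) auto
  have first: "vs!0 = tgt e" and last: "vs!k = src e"
    using vs(2-4) by (simp_all add: hd_conv_nth last_conv_nth k_def)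
  have "0 < k" using first last e(1) by (cases k) auto
  define es where "es = map (\<lambda>i. SOME f. f \<in> F \<and> {src f, tgt f} = {vs!i, vs!Suc i}) [0..<k]"
  have es: "es!i \<in> F" "{src (es!i), tgt (es!i)} = {vs!i, vs!Suc i}" if "i < k" for i
    using someI_ex[OF path[unfolded Bex_def]] that lvs unfolding es_def by auto
  have les: "length es = k" unfolding es_def by simp
  have set_es: "set es \<subseteq> F" using es(1) les by (auto simp: in_set_conv_nth)
  have "distinct es"
    unfolding distinct_conv_nth les
  proof (intro allI impI notI)
    fix i j assume ij: "i < k" "j < k" "i \<noteq> j" "es!i = es!j"
    then have "{vs!i, vs!Suc i} = {vs!j, vs!Suc j}" using es(2) by metis
    then have "i = j \<or> (i = Suc j \<and> Suc i = j)"
      using vs(1) ij(1,2) lvs by (auto simp: doubleton_eq_iff nth_eq_iff_index_eq)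
    then show False using ij(3) by linarith
  qed
  moreover have "{src ((es @ [e])!i), tgt ((es @ [e])!i)} = {vs!i, vs!((i+1) mod length vs)}"
    if "i < Suc k" for i
  proof (cases "i < k")
    case True
    then show ?thesis using es(2)[OF True] les lvs by (simp add: nth_append)
  next
    case False
    then have "i = k" using that by simp
    then show ?thesis using first last les lvs by (auto simp: nth_append)
  qed
  ultimately have "is_circle src tgt (insert e F) vs (es @ [e])"
    using set_es e(2) vs(1) \<open>0 < k\<close> les lvs unfolding is_circle_def by auto
  then show ?thesis using set_es by blast
qed

lemma potential_fits_edge_within_component:
  assumes bal: "balanced src tgt phi (insert e F)" and p: "\<forall>f\<in>F. phi f = p (src f) - p (tgt f)"
    and e: "src e \<noteq> tgt e" "e \<notin> F" and conn: "(tgt e, src e) \<in> conn_rel src tgt F"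
  shows "phi e = p (src e) - p (tgt e)"
proof -
  obtain vs where vs: "vs \<noteq> []" "hd vs = tgt e" "last vs = src e" "distinct vs"
    and steps: "\<forall>i. Suc i < length vs \<longrightarrow> (vs!i, vs!Suc i) \<in>
      {(src f, tgt f) | f. f \<in> F} \<union> {(tgt f, src f) | f. f \<in> F}"
    using rtrancl_imp_distinct_path conn unfolding conn_rel_def by meson
  moreover have "\<exists>f\<in>F. {src f, tgt f} = {vs!i, vs!Suc i}" if "Suc i < length vs" for i
    using steps[rule_format, OF that] by (auto simp: insert_commute)
  ultimately obtain es where es: "set es \<subseteq> F" and circ: "is_circle src tgt (insert e F) vs (es @ [e])"
    using circle_closing_path[where vs=vs and e=e and F=F and src=src and tgt=tgt] e by auto
  define k where "k = length es"
  have lvs: "length vs = Suc k" using circ unfolding is_circle_def k_def by simp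
  have ends: "vs!k = src e" "vs!0 = tgt e"
    using vs lvs by (simp_all add: hd_conv_nth last_conv_nth)
  let ?g = "\<lambda>i. oriented_gain src tgt phi ((es @ [e])!i) (vs!i) (vs!((i+1) mod length vs))"
  have gain: "?g i = p (vs!i) - p (vs!((i+1) mod Suc k))" if "i < k" for i
  proof -
    have "(es @ [e])!i = es!i" "es!i \<in> F" using that es by (auto simp: nth_append k_def)
    moreover have "{src (es!i), tgt (es!i)} = {vs!i, vs!((i+1) mod length vs)}"
      using circ that unfolding is_circle_def k_def by (metis length_append_singleton less_SucI nth_append)
    ultimately show ?thesis using p lvs by (simp add: oriented_gain_potential)
  qed
  have "?g k = phi e" using ends lvs by (simp add: oriented_gain_def nth_append k_def)
  moreover have "(\<Sum>i<Suc k. ?g i) = 0"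
    using bal[unfolded balanced_def, rule_format, OF circ] by (simp add: k_def)
  ultimately have "0 = (\<Sum>i<k. p (vs!i) - p (vs!((i+1) mod Suc k))) + phi e"
    using gain by simp
  also have "(\<Sum>i<k. p (vs!i) - p (vs!((i+1) mod Suc k))) = (\<Sum>i<k. p (vs!i) - p (vs!Suc i))"
    by (rule sum.cong) auto
  also have "\<dots> = p (tgt e) - p (src e)"
    using sum_lessThan_telescope'[of "\<lambda>i. p (vs!i)" k] ends by simp
  finally show ?thesis by simp
qed

lemma potential_if_balanced:
  assumes "finite S" "\<And>e. e \<in> S \<Longrightarrow> src e \<noteq> tgt e" "balanced src tgt phi S"
  shows "\<exists>p. \<forall>e\<in>S. phi e = p (src e) - p (tgt e)"
  using assms
proof (induction S rule: finite_induct)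
  case (insert e F)
  then obtain p where p: "\<forall>f\<in>F. phi f = p (src f) - p (tgt f)"
    using balanced_subset[of src tgt phi "insert e F" F] by blast
  let ?C = "conn_rel src tgt F"
  show ?case
  proof (cases "(tgt e, src e) \<in> ?C")
    case False
    \<comment> \<open>Shift the potential on the component of tgt e so that it fits the new edge.\<close>
    define p' where "p' v = (if (tgt e, v) \<in> ?C then p v + (p (src e) - p (tgt e) - phi e) else p v)" for v
    have "(tgt e, tgt e) \<in> ?C" unfolding conn_rel_def by simp
    then have "phi e = p' (src e) - p' (tgt e)" using False unfolding p'_def by simp
    moreover have "phi f = p' (src f) - p' (tgt f)" if "f \<in> F" for f
    proof -
      have "(tgt e, src f) \<in> ?C \<longleftrightarrow> (tgt e, tgt f) \<in> ?C"
        using conn_rel_edge[OF that] equiv_conn_rel[of src tgt F]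
        by (meson equiv_def symD transD)
      then show ?thesis using p that unfolding p'_def by auto
    qed
    ultimately show ?thesis by auto
  next
    case True
    then show ?thesis
      using potential_fits_edge_within_component[OF insert(5) p] insert(2,4) p by auto
  qed
qed simp

section \<open>Independent families of vectors\<close>

definition independent_family :: "('i \<Rightarrow> 'b::real_vector) \<Rightarrow> 'i set \<Rightarrow> bool" where
  "independent_family v K \<longleftrightarrow> (\<forall>c. (\<Sum>i\<in>K. c i *\<^sub>R v i) = 0 \<longrightarrow> (\<forall>i\<in>K. c i = 0))"

lemma independent_family_cong:
  "(\<And>i. i \<in> K \<Longrightarrow> v i = w i) \<Longrightarrow> independent_family v K = independent_family w K"
  unfolding independent_family_def by (metis (no_types, lifting) sum.cong)

lemma independent_family_singleton: "independent_family v {i} \<longleftrightarrow> v i \<noteq> 0"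
  unfolding independent_family_def by auto

lemma independent_family_inj_on:
  assumes "finite K" "independent_family v K" shows "inj_on v K"
proof (rule inj_onI, rule ccontr)
  fix i j assume ij: "i \<in> K" "j \<in> K" "v i = v j" "i \<noteq> j"
  define c where "c l = (if l = i then 1 else if l = j then -1 else (0::real))" for l
  have "(\<Sum>l\<in>K. c l *\<^sub>R v l) = (\<Sum>l\<in>{i, j}. c l *\<^sub>R v l)"
    using assms(1) ij(1,2) by (intro sum.mono_neutral_right) (auto simp: c_def)
  also have "\<dots> = 0" using ij(3,4) by (simp add: c_def)
  finally have "c i = 0" using assms(2) ij(1) unfolding independent_family_def by blast
  then show False by (simp add: c_def)
qed

lemma independent_family_imp_independent:
  assumes "finite K" "independent_family v K" shows "independent (v ` K)"
proof
  assume "dependent (v ` K)"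
  then obtain u where u: "\<exists>w\<in>v ` K. u w \<noteq> 0" "(\<Sum>w\<in>v ` K. u w *\<^sub>R w) = 0"
    using dependent_finite[of "v ` K"] assms(1) by auto
  have "(\<Sum>i\<in>K. u (v i) *\<^sub>R v i) = 0"
    using u(2) sum.reindex[OF independent_family_inj_on[OF assms], of "\<lambda>w. u w *\<^sub>R w"] by simp
  then show False using assms(2) u(1) unfolding independent_family_def by auto
qed

lemma dim_span_independent_family:
  assumes "finite K" "independent_family v K" shows "dim (span (v ` K)) = card K"
  using dim_span_eq_card_independent[OF independent_family_imp_independent[OF assms]]
    card_image[OF independent_family_inj_on[OF assms]] by simp

lemma span_independent_family_eq_UNIV:
  fixes v :: "'i \<Rightarrow> 'b::euclidean_space"
  assumes "finite K" "independent_family v K" "card K = DIM('b)" shows "span (v ` K) = UNIV"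
proof -
  have "dim (v ` K) = DIM('b)"
    using dim_span_independent_family[OF assms(1,2)] assms(3) by (simp add: dim_span)
  then show ?thesis by (simp add: dim_eq_full)
qed

lemma independent_family_insert:
  assumes "finite K" "k \<notin> K" "independent_family v K" "v k \<notin> span (v ` K)"
  shows "independent_family v (insert k K)"
  unfolding independent_family_def
proof (intro allI impI)
  fix c assume "(\<Sum>i\<in>insert k K. c i *\<^sub>R v i) = 0"
  then have eq: "c k *\<^sub>R v k = - (\<Sum>i\<in>K. c i *\<^sub>R v i)" using assms(1,2) by (simp add: eq_neg_iff_add_eq_0)
  have ck: "c k = 0"
  proof (rule ccontr)
    assume "c k \<noteq> 0"
    then have "v k = (1 / c k) *\<^sub>R (c k *\<^sub>R v k)" by simp
    then have "v k = (- 1 / c k) *\<^sub>R (\<Sum>i\<in>K. c i *\<^sub>R v i)" using eq by simp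
    moreover have "(\<Sum>i\<in>K. c i *\<^sub>R v i) \<in> span (v ` K)"
      by (intro span_sum span_scale span_base) auto
    ultimately show False using assms(4) by (metis span_scale)
  qed
  then have "(\<Sum>i\<in>K. c i *\<^sub>R v i) = 0" using eq by simp
  then show "\<forall>i\<in>insert k K. c i = 0" using assms(3) ck unfolding independent_family_def by auto
qed

lemma independent_family_dual_vector:
  fixes a :: "'i \<Rightarrow> 'a::euclidean_space"
  assumes "finite N" "independent_family a N" "j \<in> N"
  shows "\<exists>z. \<forall>i\<in>N. inner (a i) z = (if i = j then 1 else 0)"
proof -
  let ?U = "span (a ` (N - {j}))"
  obtain y z where yz: "y \<in> ?U" "\<And>w. w \<in> ?U \<Longrightarrow> orthogonal z w" "a j = y + z"
    using orthogonal_subspace_decomp_exists[of "a ` (N - {j})" "a j"] by blast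
  have "a ` (N - {j}) = a ` N - {a j}"
    using independent_family_inj_on[OF assms(1,2)] assms(3) by (auto simp: inj_on_def)
  then have "a j \<notin> ?U"
    using independent_family_imp_independent[OF assms(1,2)] assms(3) by (auto simp: dependent_def)
  then have "z \<noteq> 0" using yz by auto
  have "inner (a j) z = inner z z"
    using yz(2)[OF yz(1)] by (simp add: yz(3) inner_add_left inner_add_right orthogonal_def inner_commute)
  moreover have "inner (a i) z = 0" if "i \<in> N" "i \<noteq> j" for i
    using yz(2)[of "a i"] that by (auto simp: orthogonal_def inner_commute intro: span_base)
  ultimately show ?thesis using \<open>z \<noteq> 0\<close> by (intro exI[of _ "z /\<^sub>R inner z z"]) auto
qed

lemma linear_system_independent:
  fixes a :: "'i \<Rightarrow> 'a::euclidean_space" and b :: "'i \<Rightarrow> real"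
  assumes "finite N" "independent_family a N"
  defines "X \<equiv> {P. \<forall>i\<in>N. inner (a i) P = b i}"
  shows "X \<noteq> {}" and "affine X" and "aff_dim X = int (DIM('a) - card N)"
proof -
  have "\<forall>j\<in>N. \<exists>z. \<forall>i\<in>N. inner (a i) z = (if i = j then 1 else 0)"
    using independent_family_dual_vector[OF assms(1,2)] by blast
  then obtain z where z: "\<forall>j\<in>N. \<forall>i\<in>N. inner (a i) (z j) = (if i = j then 1 else 0)"
    by (rule bchoice[elim_format]) blast
  define P0 where "P0 = (\<Sum>j\<in>N. b j *\<^sub>R z j)"
  have "inner (a i) P0 = b i" if "i \<in> N" for i
  proof -
    have "inner (a i) P0 = (\<Sum>j\<in>N. if j = i then b j else 0)"
      unfolding P0_def inner_sum_right using that z by (intro sum.cong) auto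
    then show ?thesis using assms(1) that by simp
  qed
  then have P0: "P0 \<in> X" unfolding X_def by blast
  then show "X \<noteq> {}" by blast
  have "X = (\<Inter>i\<in>N. {P. inner (a i) P = b i})" unfolding X_def by auto
  then show "affine X" by (auto intro: affine_hyperplane)
  define W where "W = {y. \<forall>x \<in> span (a ` N). orthogonal x y}"
  have W: "W = {y. \<forall>i\<in>N. inner (a i) y = 0}"
    unfolding W_def orthogonal_def
    by (auto intro: span_base orthogonal_to_span[unfolded orthogonal_def] simp: inner_commute)
  have "X = (+) P0 ` W"
  proof (intro set_eqI iffI)
    fix P assume "P \<in> X"
    then have "P - P0 \<in> W" using P0 unfolding W X_def by (simp add: inner_diff_right)
    then show "P \<in> (+) P0 ` W" by (rule rev_image_eqI) simp
  qed (use P0 in \<open>auto simp: W X_def inner_add_right\<close>)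
  then have "aff_dim X = int (dim W)"
    by (simp add: aff_dim_translation_eq W subspace_def inner_add_right aff_dim_subspace)
  also have "dim W = DIM('a) - card N"
    using dim_subspace_orthogonal_to_vectors[of "span (a ` N)" UNIV]
      dim_span_independent_family[OF assms(1,2)] by (simp add: W_def)
  finally show "aff_dim X = int (DIM('a) - card N)" .
qed

section \<open>Generic configurations\<close>

lemma independent_family_bounded_below:
  fixes v :: "'i::finite \<Rightarrow> 'b::euclidean_space"
  assumes "independent_family v K"
  shows "\<exists>e>0. \<forall>c. e * norm (\<chi> i. if i \<in> K then c i else 0) \<le> norm (\<Sum>i\<in>K. c i *\<^sub>R v i)"
proof -
  define T where "T = (\<lambda>c::real^'i. \<Sum>i\<in>K. c$i *\<^sub>R v i)"
  define s where "s = {c::real^'i. \<forall>i. i \<notin> K \<longrightarrow> c$i = 0}"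
  have "bounded_linear T" unfolding T_def
    by (intro bounded_linear_sum bounded_linear_scaleR_left[THEN bounded_linear_compose]
        bounded_linear_vec_nth)
  moreover have "subspace s" unfolding s_def subspace_def by auto
  moreover have "\<forall>c\<in>s. T c = 0 \<longrightarrow> c = 0"
  proof (intro ballI impI)
    fix c assume "c \<in> s" "T c = 0"
    then have "\<forall>i\<in>K. c$i = 0" using assms unfolding independent_family_def T_def by blast
    with \<open>c \<in> s\<close> show "c = 0" unfolding s_def by (auto simp: vec_eq_iff)
  qed
  ultimately obtain e where "e > 0" and e: "\<And>c. c \<in> s \<Longrightarrow> e * norm c \<le> norm (T c)"
    using injective_imp_isometric[OF closed_subspace] by blast
  have "(\<chi> i. if i \<in> K then c i else 0) \<in> s" for c unfolding s_def by simp
  moreover have "T (\<chi> i. if i \<in> K then c i else 0) = (\<Sum>i\<in>K. c i *\<^sub>R v i)" for c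
    unfolding T_def by simp
  ultimately show ?thesis using \<open>e > 0\<close> e by metis
qed

lemma independent_family_perturb:
  fixes v :: "'i::finite \<Rightarrow> 'b::euclidean_space"
  assumes "independent_family v K"
  obtains e where "e > 0" "\<And>w. (\<Sum>i\<in>K. norm (w i - v i)) < e \<Longrightarrow> independent_family w K"
proof -
  obtain e where "e > 0"
    and e: "\<And>c. e * norm (\<chi> i. if i \<in> K then c i else 0) \<le> norm (\<Sum>i\<in>K. c i *\<^sub>R v i)"
    using independent_family_bounded_below[OF assms] by blast
  have "independent_family w K" if close: "(\<Sum>i\<in>K. norm (w i - v i)) < e" for w
    unfolding independent_family_def
  proof (intro allI impI)
    fix c assume c: "(\<Sum>i\<in>K. c i *\<^sub>R w i) = 0"
    define cv where "cv = (\<chi> i. if i \<in> K then c i else 0)"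
    have "e * norm cv \<le> norm (\<Sum>i\<in>K. c i *\<^sub>R (v i - w i))"
      using e[of c] c by (simp add: cv_def sum_subtractf scaleR_diff_right)
    also have "\<dots> \<le> (\<Sum>i\<in>K. norm cv * norm (w i - v i))"
    proof (rule sum_norm_le)
      fix i assume "i \<in> K"
      then have "\<bar>c i\<bar> \<le> norm cv" using component_le_norm_cart[of cv i] by (simp add: cv_def)
      then show "norm (c i *\<^sub>R (v i - w i)) \<le> norm cv * norm (w i - v i)"
        by (simp add: norm_minus_commute mult_right_mono)
    qed
    also have "\<dots> = norm cv * (\<Sum>i\<in>K. norm (w i - v i))" by (simp add: sum_distrib_left)
    finally have le: "e * norm cv \<le> norm cv * (\<Sum>i\<in>K. norm (w i - v i))" .
    have "norm cv = 0"
    proof (rule ccontr)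
      assume "norm cv \<noteq> 0"
      then have "norm cv * (\<Sum>i\<in>K. norm (w i - v i)) < norm cv * e"
        using close by (intro mult_strict_left_mono) auto
      then show False using le by (simp add: mult.commute)
    qed
    then have cv0: "cv$i = 0" for i by simp
    show "\<forall>i\<in>K. c i = 0"
    proof
      fix i assume "i \<in> K"
      then show "c i = 0" using cv0[of i] by (simp add: cv_def)
    qed
  qed
  then show ?thesis using \<open>e > 0\<close> that by blast
qed

lemma open_independent_family:
  fixes F :: "'i::finite \<Rightarrow> 'q::topological_space \<Rightarrow> 'b::euclidean_space"
  assumes "\<And>i. continuous_on UNIV (F i)"
  shows "open {q. independent_family (\<lambda>i. F i q) K}"
proof (rule open_subopen[THEN iffD2], intro ballI)
  fix q0 assume "q0 \<in> {q. independent_family (\<lambda>i. F i q) K}"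
  then obtain e where "e > 0"
    and e: "\<And>w. (\<Sum>i\<in>K. norm (w i - F i q0)) < e \<Longrightarrow> independent_family w K"
    using independent_family_perturb by (metis mem_Collect_eq)
  define U where "U = {q. (\<Sum>i\<in>K. norm (F i q - F i q0)) < e}"
  have "open U" unfolding U_def by (intro open_Collect_less continuous_intros assms)
  moreover have "q0 \<in> U" using \<open>e > 0\<close> unfolding U_def by simp
  moreover have "U \<subseteq> {q. independent_family (\<lambda>i. F i q) K}" using e unfolding U_def by auto
  ultimately show "\<exists>U. open U \<and> q0 \<in> U \<and> U \<subseteq> {q. independent_family (\<lambda>i. F i q) K}" by blast
qed

lemma norm_axis:
  fixes x :: "'a::euclidean_space" and k :: "'n::finite"
  shows "norm (axis k x) = norm x"
proof -
  have "(norm (axis k x))\<^sup>2 = (norm x)\<^sup>2" by (simp add: power2_norm_eq_inner inner_axis_axis)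
  then show ?thesis by (rule power2_eq_imp_eq) simp_all
qed

lemma dense_independent_lifted_differences:
  fixes f :: "'n::finite \<Rightarrow> 'a::euclidean_space \<Rightarrow> 'b::euclidean_space" and \<rho> :: "'n \<Rightarrow> 'n"
  assumes disj: "\<And>i. i \<in> K \<Longrightarrow> \<rho> i \<notin> K"
    and escape: "\<And>i x y V r. finite V \<Longrightarrow> card V < card K \<Longrightarrow> 0 < r \<Longrightarrow>
                   \<exists>u. norm u < r \<and> f i (x + u) - y \<notin> span V"
    and "K' \<subseteq> K" "0 < \<epsilon>"
  shows "\<exists>Q::'a^'n. dist Q Q0 < \<epsilon> \<and> independent_family (\<lambda>i. f i (Q$i) - f (\<rho> i) (Q$\<rho> i)) K'"
  using finite[of K'] assms(3,4)
proof (induction K' arbitrary: Q0 \<epsilon> rule: finite_induct)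
  case empty
  show ?case using empty by (intro exI[of _ Q0]) (simp add: independent_family_def)
next
  case (insert k K')
  let ?F = "\<lambda>Q i. f i (Q$i) - f (\<rho> i) (Q$\<rho> i)"
  obtain Q1 where Q1: "dist Q1 Q0 < \<epsilon>/2" "independent_family (?F Q1) K'"
    using insert by (metis half_gt_zero insert_subset)
  have "card (?F Q1 ` K') < card K"
    using insert(1,2,4) card_image_le[of K' "?F Q1"] card_mono[of K "insert k K'"] by simp
  then obtain u where u: "norm u < \<epsilon>/2" "f k (Q1$k + u) - f (\<rho> k) (Q1$\<rho> k) \<notin> span (?F Q1 ` K')"
    using escape[of "?F Q1 ` K'" "\<epsilon>/2" k "Q1$k" "f (\<rho> k) (Q1$\<rho> k)"] insert(5) by auto
  define Q where "Q = Q1 + axis k u"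
  have not_k: "\<rho> i \<noteq> k" if "i \<in> insert k K'" for i using disj that insert(4) by blast
  then have same: "?F Q i = ?F Q1 i" if "i \<in> K'" for i
    using that insert(2) by (auto simp: Q_def axis_def)
  have "?F Q k = f k (Q1$k + u) - f (\<rho> k) (Q1$\<rho> k)"
    using not_k[of k] by (simp add: Q_def axis_def)
  then have "independent_family (?F Q) (insert k K')"
    using independent_family_insert[of K' k "?F Q"] independent_family_cong[of K' "?F Q" "?F Q1"]
      image_cong[OF refl same] insert(1,2) Q1(2) u(2) same by simp
  moreover have "dist Q Q0 < \<epsilon>"
    using dist_triangle[of Q Q0 Q1] Q1(1) u(1) by (simp add: Q_def dist_norm norm_axis)
  ultimately show ?case by blast
qed

lemma escape_span_translate:
  fixes x y :: "'a::euclidean_space"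
  assumes "finite V" "card V < DIM('a)" "0 < r"
  shows "\<exists>u. norm u < r \<and> x + u - y \<notin> span V"
proof -
  have "dim V < DIM('a)" using dim_le_card[of V V] assms(1,2) span_superset by fastforce
  then obtain w where w: "w \<noteq> 0" "\<And>v. v \<in> span V \<Longrightarrow> orthogonal w v"
    using orthogonal_to_subspace_exists by blast
  show ?thesis
  proof (cases "x - y \<in> span V")
    case False
    then show ?thesis using assms(3) by (intro exI[of _ 0]) simp
  next
    case True
    define u where "u = (r / (2 * norm w)) *\<^sub>R w"
    have "x + u - y \<notin> span V"
    proof
      assume "x + u - y \<in> span V"
      then have "u \<in> span V" using True span_diff by force
      then have "inner w u = 0" using w(2) by (simp add: orthogonal_def)
      then have "(r / (2 * norm w)) * inner w w = 0" by (simp add: u_def)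
      then show False using w(1) assms(3) by simp
    qed
    moreover have "norm u < r" using w(1) assms(3) by (simp add: u_def)
    ultimately show ?thesis by blast
  qed
qed

text \<open>A nonzero linear functional on the lifted space cannot vanish on a piece of the paraboloid:
  its second difference along any direction is a multiple of its last coordinate.\<close>
lemma escape_span_paraboloid:
  fixes x :: "'a::euclidean_space" and y :: "'a \<times> real"
  assumes "finite V" "card V < DIM('a) + 1" "0 < r"
  shows "\<exists>u. norm u < r \<and> (x + u, (norm (x + u))\<^sup>2 - c) - y \<notin> span V"
proof (rule ccontr)
  assume "\<not> ?thesis"
  then have in_span: "(x + u, (norm (x + u))\<^sup>2 - c) - y \<in> span V" if "norm u < r" for u
    using that by blast
  have "dim V < DIM('a \<times> real)" using dim_le_card[of V V] assms(1,2) span_superset by fastforce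
  then obtain z where z: "z \<noteq> 0" "\<And>v. v \<in> span V \<Longrightarrow> orthogonal z v"
    using orthogonal_to_subspace_exists by blast
  obtain w s where ws: "z = (w, s)" by (cases z)
  define g where "g u = inner w (x + u - fst y) + s * ((norm (x + u))\<^sup>2 - c - snd y)" for u
  have g0: "g u = 0" if "norm u < r" for u
    using z(2)[OF in_span[OF that]] by (simp add: orthogonal_def ws g_def inner_prod_def)
  have g: "g u = inner w (x - fst y) + inner w u + s * (inner x x + 2 * inner x u + inner u u - c - snd y)" for u
    unfolding g_def by (simp add: power2_norm_eq_inner inner_add_left inner_add_right inner_diff_right inner_commute)
  obtain b :: 'a where b: "b \<in> Basis" using nonempty_Basis by blast
  define v where "v = (if w \<noteq> 0 then w else b)"
  have "v \<noteq> 0" unfolding v_def using b by (auto simp: nonzero_Basis)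
  define t where "t = r / (2 * norm v)"
  have "t > 0" "norm (t *\<^sub>R v) < r" "norm (- (t *\<^sub>R v)) < r"
    unfolding t_def using \<open>v \<noteq> 0\<close> assms(3) by auto
  then have zero: "g (t *\<^sub>R v) = 0" "g (- (t *\<^sub>R v)) = 0" "g 0 = 0" using g0 assms(3) by auto
  have "g (t *\<^sub>R v) + g (- (t *\<^sub>R v)) - 2 * g 0 = 2 * s * t * t * inner v v"
    unfolding g by (simp add: algebra_simps)
  then have "s = 0" using zero \<open>t > 0\<close> \<open>v \<noteq> 0\<close> by simp
  then have "g (t *\<^sub>R v) - g 0 = t * inner w v" unfolding g by simp
  then have "inner w v = 0" using zero \<open>t > 0\<close> by simp
  then have "w = 0" unfolding v_def by (auto split: if_splits)
  then show False using z(1) \<open>s = 0\<close> ws by (simp add: zero_prod_def)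
qed

lemma open_dense_independent_lifted_differences:
  fixes f :: "'n::finite \<Rightarrow> 'a::euclidean_space \<Rightarrow> 'b::euclidean_space" and \<rho> :: "'n \<Rightarrow> 'n"
  assumes cont: "\<And>i. continuous_on UNIV (f i)"
    and disj: "\<And>i. i \<in> K \<Longrightarrow> \<rho> i \<notin> K"
    and escape: "\<And>i x y V r. finite V \<Longrightarrow> card V < card K \<Longrightarrow> 0 < r \<Longrightarrow>
                   \<exists>u. norm u < r \<and> f i (x + u) - y \<notin> span V"
  defines "A \<equiv> {Q::'a^'n. independent_family (\<lambda>i. f i (Q$i) - f (\<rho> i) (Q$\<rho> i)) K}"
  shows "open A \<and> closure A = UNIV"
proof
  have "continuous_on UNIV (\<lambda>Q::'a^'n. f i (Q$i) - f (\<rho> i) (Q$\<rho> i))" for i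
    by (intro continuous_intros continuous_on_compose2[OF cont]) auto
  then show "open A" unfolding A_def by (rule open_independent_family)
  have "Q0 \<in> closure A" for Q0
    unfolding closure_approachable A_def
    using dense_independent_lifted_differences[of K \<rho> f K _ Q0, OF disj escape] by auto
  then show "closure A = UNIV" by auto
qed

lemma open_dense_Int:
  fixes A B :: "'q::topological_space set"
  assumes "open A \<and> closure A = UNIV" "open B \<and> closure B = UNIV"
  shows "open (A \<inter> B) \<and> closure (A \<inter> B) = UNIV"
  using assms closure_open_Int_superset[of A B] by auto

lemma open_dense_INT:
  fixes A :: "'i \<Rightarrow> 'q::topological_space set"
  assumes "finite I" "\<And>i. i \<in> I \<Longrightarrow> open (A i) \<and> closure (A i) = UNIV"
  shows "open (\<Inter>i\<in>I. A i) \<and> closure (\<Inter>i\<in>I. A i) = UNIV"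
  using assms
proof (induction I rule: finite_induct)
  case (insert k I)
  then show ?case using open_dense_Int[of "A k" "\<Inter>i\<in>I. A i"] by simp
qed simp

definition paraboloid_lift :: "('n \<Rightarrow> real) \<Rightarrow> ('a::real_inner)^'n \<Rightarrow> 'n \<Rightarrow> 'a \<times> real" where
  "paraboloid_lift p Q i = (Q$i, (norm (Q$i))\<^sup>2 - p i)"

text \<open>C is the finite set of potentials in use. In applications \<open>\<rho>\<close> sends every vertex to the
  representative of its component and K consists of non-representatives, so \<open>\<rho>\<close> maps K outside K.\<close>
definition general_position :: "('n::finite \<Rightarrow> real) set \<Rightarrow> ('a::euclidean_space)^'n \<Rightarrow> bool" where
  "general_position C Q \<longleftrightarrow> (\<forall>\<rho> K. (\<forall>i\<in>K. \<rho> i \<notin> K) \<longrightarrow>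
     (card K \<le> DIM('a) \<longrightarrow> independent_family (\<lambda>i. Q$i - Q$\<rho> i) K) \<and>
     (card K = DIM('a) + 1 \<longrightarrow>
        (\<forall>p\<in>C. independent_family (\<lambda>i. paraboloid_lift p Q i - paraboloid_lift p Q (\<rho> i)) K)))"

lemma open_dense_independent_differences:
  fixes \<rho> :: "'n::finite \<Rightarrow> 'n"
  assumes "\<forall>i\<in>K. \<rho> i \<notin> K" "card K \<le> DIM('a::euclidean_space)"
  defines "A \<equiv> {Q::'a^'n. independent_family (\<lambda>i. Q$i - Q$\<rho> i) K}"
  shows "open A \<and> closure A = UNIV"
proof -
  have "A = {Q. independent_family (\<lambda>i. id (Q$i) - id (Q$\<rho> i)) K}" unfolding A_def by simp
  moreover have escape: "\<exists>u. norm u < r \<and> id (x + u) - y \<notin> span V"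
    if "finite V" "card V < card K" "0 < r" for x y :: 'a and V r
    using escape_span_translate[where V=V and r=r and x=x and y=y] that assms(2) by simp
  ultimately show ?thesis
    using open_dense_independent_lifted_differences[of "\<lambda>_. id" K \<rho>, OF _ _ escape] assms(1)
    by simp
qed

lemma open_dense_independent_paraboloid_differences:
  fixes \<rho> :: "'n::finite \<Rightarrow> 'n" and p :: "'n \<Rightarrow> real"
  assumes "\<forall>i\<in>K. \<rho> i \<notin> K" "card K = DIM('a::euclidean_space) + 1"
  defines "A \<equiv> {Q::'a^'n. independent_family (\<lambda>i. paraboloid_lift p Q i - paraboloid_lift p Q (\<rho> i)) K}"
  shows "open A \<and> closure A = UNIV"
proof -
  let ?f = "\<lambda>i x. (x, (norm x)\<^sup>2 - p i)"
  have "A = {Q. independent_family (\<lambda>i. ?f i (Q$i) - ?f (\<rho> i) (Q$\<rho> i)) K}"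
    unfolding A_def paraboloid_lift_def by simp
  moreover have cont: "continuous_on UNIV (?f i)" for i by (intro continuous_intros)
  moreover have escape: "\<exists>u. norm u < r \<and> ?f i (x + u) - y \<notin> span V"
    if "finite V" "card V < card K" "0 < r" for i and x :: 'a and y V r
    using escape_span_paraboloid[where V=V and r=r and x=x and c="p i" and y=y] that assms(2) by simp
  ultimately show ?thesis
    using open_dense_independent_lifted_differences[of ?f K \<rho>, OF cont _ escape] assms(1) by simp
qed

lemma open_dense_general_position:
  fixes C :: "('n::finite \<Rightarrow> real) set"
  assumes "finite C"
  defines "G \<equiv> {Q::('a::euclidean_space)^'n. general_position C Q}"
  shows "open G \<and> closure G = UNIV"
proof -
  define A where "A \<rho> K = {Q::'a^'n. card K \<le> DIM('a) \<longrightarrow> independent_family (\<lambda>i. Q$i - Q$\<rho> i) K}"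
    for \<rho> K
  define B where "B \<rho> K p = {Q::'a^'n. card K = DIM('a) + 1 \<longrightarrow>
      independent_family (\<lambda>i. paraboloid_lift p Q i - paraboloid_lift p Q (\<rho> i)) K}" for \<rho> K p
  have G: "G = (\<Inter>\<rho>. \<Inter>K\<in>{K. \<forall>i\<in>K. \<rho> i \<notin> K}. A \<rho> K \<inter> (\<Inter>p\<in>C. B \<rho> K p))"
    unfolding G_def general_position_def A_def B_def by auto
  have "open (A \<rho> K) \<and> closure (A \<rho> K) = UNIV" if "\<forall>i\<in>K. \<rho> i \<notin> K" for \<rho> K
    using open_dense_independent_differences[OF that] by (cases "card K \<le> DIM('a)") (simp_all add: A_def)
  moreover have "open (B \<rho> K p) \<and> closure (B \<rho> K p) = UNIV" if "\<forall>i\<in>K. \<rho> i \<notin> K" for \<rho> K p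
    using open_dense_independent_paraboloid_differences[where 'a='a, OF that]
    by (cases "card K = DIM('a) + 1") (simp_all add: B_def)
  ultimately have "open (A \<rho> K \<inter> (\<Inter>p\<in>C. B \<rho> K p)) \<and> closure (A \<rho> K \<inter> (\<Inter>p\<in>C. B \<rho> K p)) = UNIV"
    if "\<forall>i\<in>K. \<rho> i \<notin> K" for \<rho> K
    using that assms(1) by (intro open_dense_Int open_dense_INT) auto
  then have "open (\<Inter>K\<in>{K. \<forall>i\<in>K. \<rho> i \<notin> K}. A \<rho> K \<inter> (\<Inter>p\<in>C. B \<rho> K p)) \<and>
      closure (\<Inter>K\<in>{K. \<forall>i\<in>K. \<rho> i \<notin> K}. A \<rho> K \<inter> (\<Inter>p\<in>C. B \<rho> K p)) = UNIV" for \<rho>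
    by (intro open_dense_INT) simp_all
  then show ?thesis unfolding G by (rule open_dense_INT[OF finite])
qed

lemma inj_if_general_position:
  assumes "general_position C (Q::('a::euclidean_space)^'n::finite)"
  shows "inj (($) Q)"
proof (rule injI, rule ccontr)
  fix i j assume "Q$i = Q$j" "i \<noteq> j"
  moreover have "card {i} \<le> DIM('a)" using DIM_positive[where 'a='a] by simp
  ultimately have "independent_family (\<lambda>k. Q$k - Q$j) {i}"
    using assms[unfolded general_position_def, rule_format, where \<rho>="\<lambda>_. j" and K="{i}"] by simp
  then show False using \<open>Q$i = Q$j\<close> by (simp add: independent_family_singleton)
qed

section \<open>Pythagorean arrangements\<close>

lemma dist_sq_minus_weight:
  fixes Q :: "('a::real_inner)^'n"
  shows "(dist P (Q$i))\<^sup>2 - p i = (norm P)\<^sup>2 - inner (paraboloid_lift p Q i) (2 *\<^sub>R P, -1)"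
  by (simp add: paraboloid_lift_def dist_norm power2_norm_eq_inner inner_diff_left inner_diff_right
      inner_commute algebra_simps)

lemma mem_inter_hyp_iff_paraboloid_lift:
  fixes Q :: "('a::euclidean_space)^'n::finite"
  assumes "\<forall>e\<in>S. phi e = p (src e) - p (tgt e)"
  shows "P \<in> inter_hyp src tgt phi Q S \<longleftrightarrow>
    (\<forall>i. inner (paraboloid_lift p Q i - paraboloid_lift p Q (class_rep (conn_rel src tgt S) i))
       (2 *\<^sub>R P, -1) = 0)"
proof -
  let ?f = "\<lambda>i. (dist P (Q$i))\<^sup>2 - p i"
  have "P \<in> inter_hyp src tgt phi Q S \<longleftrightarrow> (\<forall>e\<in>S. ?f (src e) = ?f (tgt e))"
    using assms by (auto simp: inter_hyp_def hyp_def pyth_def)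
  also have "\<dots> \<longleftrightarrow> (\<forall>i. ?f (class_rep (conn_rel src tgt S) i) = ?f i)"
    by (rule edge_invariant_iff_class_rep_invariant)
  also have "\<dots> \<longleftrightarrow> (\<forall>i. inner (paraboloid_lift p Q i - paraboloid_lift p Q (class_rep (conn_rel src tgt S) i))
       (2 *\<^sub>R P, -1) = 0)"
  proof -
    have "?f (class_rep (conn_rel src tgt S) i) = ?f i \<longleftrightarrow>
        inner (paraboloid_lift p Q i - paraboloid_lift p Q (class_rep (conn_rel src tgt S) i))
          (2 *\<^sub>R P, -1) = 0" for i
      unfolding dist_sq_minus_weight inner_diff_left by linarith
    then show ?thesis by simp
  qed
  finally show ?thesis .
qed

lemma balanced_if_inter_hyp_nonempty:
  assumes "inter_hyp src tgt phi Q S \<noteq> {}"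
  shows "balanced src tgt phi S"
proof -
  obtain P where "P \<in> inter_hyp src tgt phi Q S" using assms by blast
  then show ?thesis
    by (intro balanced_if_potential[where p = "\<lambda>i. (dist P (Q$i))\<^sup>2"])
      (auto simp: inter_hyp_def hyp_def pyth_def)
qed

lemma inter_hyp_empty_if_rank_exceeds_dim:
  fixes Q :: "('a::euclidean_space)^'n::finite"
  assumes "general_position C Q" "p \<in> C" "\<forall>e\<in>S. phi e = p (src e) - p (tgt e)"
    and "DIM('a) < CARD('n) - ncomp src tgt S"
  shows "inter_hyp src tgt phi Q S = {}"
proof (rule ccontr)
  let ?\<rho> = "class_rep (conn_rel src tgt S)"
  let ?w = "\<lambda>i. paraboloid_lift p Q i - paraboloid_lift p Q (?\<rho> i)"
  assume "inter_hyp src tgt phi Q S \<noteq> {}"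
  then obtain P where P: "P \<in> inter_hyp src tgt phi Q S" by blast
  have "DIM('a) + 1 \<le> card {i. ?\<rho> i \<noteq> i}"
    using assms(4) card_non_class_reps_conn_rel[of src tgt S] by simp
  then obtain K where K: "K \<subseteq> {i. ?\<rho> i \<noteq> i}" "card K = DIM('a) + 1"
    by (meson obtain_subset_with_card_n)
  have "?\<rho> i \<notin> {i. ?\<rho> i \<noteq> i}" for i using class_rep_idem[OF equiv_conn_rel] by simp
  then have "\<forall>i\<in>K. ?\<rho> i \<notin> K" using K(1) by blast
  then have "independent_family ?w K"
    using assms(1,2) K(2) unfolding general_position_def by blast
  then have "span (?w ` K) = UNIV" using K(2) by (intro span_independent_family_eq_UNIV) simp_all
  moreover have orth: "orthogonal (2 *\<^sub>R P, -1) v" if "v \<in> ?w ` K" for v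
    using that mem_inter_hyp_iff_paraboloid_lift[OF assms(3), THEN iffD1, OF P]
    by (auto simp: orthogonal_def inner_commute)
  ultimately have "orthogonal (2 *\<^sub>R P, -1) (2 *\<^sub>R P, -1 :: real)"
    using orthogonal_to_span[of _ "?w ` K", OF _ orth] by simp
  then have "4 * inner P P + 1 = 0" by (simp add: orthogonal_def)
  with inner_ge_zero[of P] show False by linarith
qed

lemma inter_hyp_flat_if_rank_le_dim:
  fixes Q :: "('a::euclidean_space)^'n::finite"
  assumes "general_position C Q" "\<forall>e\<in>S. phi e = p (src e) - p (tgt e)"
    and "CARD('n) - ncomp src tgt S \<le> DIM('a)"
  defines "X \<equiv> inter_hyp src tgt phi Q S"
  shows "X \<noteq> {}" and "affine X" and "aff_dim X = int (DIM('a) - (CARD('n) - ncomp src tgt S))"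
proof -
  let ?\<rho> = "class_rep (conn_rel src tgt S)"
  let ?N = "{i. ?\<rho> i \<noteq> i}"
  let ?b = "\<lambda>i. ((norm (Q$i))\<^sup>2 - p i - ((norm (Q$?\<rho> i))\<^sup>2 - p (?\<rho> i))) / 2"
  have card: "card ?N = CARD('n) - ncomp src tgt S" by (rule card_non_class_reps_conn_rel)
  have "\<And>i. i \<in> ?N \<Longrightarrow> ?\<rho> i \<notin> ?N" by (simp add: class_rep_idem[OF equiv_conn_rel])
  then have "independent_family (\<lambda>i. Q$i - Q$?\<rho> i) ?N"
    using assms(1)[unfolded general_position_def, rule_format, THEN conjunct1] assms(3) card
    by presburger
  moreover have "X = {P. \<forall>i\<in>?N. inner (Q$i - Q$?\<rho> i) P = ?b i}"
  proof -
    have linear: "inner (paraboloid_lift p Q i - paraboloid_lift p Q (?\<rho> i)) (2 *\<^sub>R P, -1) = 0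
        \<longleftrightarrow> inner (Q$i - Q$?\<rho> i) P = ?b i" for i P
      by (simp add: paraboloid_lift_def inner_prod_def inner_diff_left inner_commute) argo
    have "P \<in> X \<longleftrightarrow> (\<forall>i\<in>?N. inner (Q$i - Q$?\<rho> i) P = ?b i)" for P
    proof -
      have "(\<forall>i. inner (Q$i - Q$?\<rho> i) P = ?b i) \<longleftrightarrow> (\<forall>i\<in>?N. inner (Q$i - Q$?\<rho> i) P = ?b i)"
      proof (intro iffI allI)
        fix i assume h: "\<forall>i\<in>?N. inner (Q$i - Q$?\<rho> i) P = ?b i"
        show "inner (Q$i - Q$?\<rho> i) P = ?b i" using h by (cases "?\<rho> i = i") auto
      qed simp
      then show ?thesis unfolding X_def mem_inter_hyp_iff_paraboloid_lift[OF assms(2)] linear .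
    qed
    then show ?thesis by blast
  qed
  ultimately show "X \<noteq> {}" "affine X" "aff_dim X = int (DIM('a) - (CARD('n) - ncomp src tgt S))"
    using linear_system_independent[of ?N "\<lambda>i. Q$i - Q$?\<rho> i" ?b] card by simp_all
qed

lemma inter_hyp_eq_if_conn_rel_eq:
  fixes Q :: "('a::euclidean_space)^'n::finite"
  assumes "\<forall>e\<in>S1 \<union> S2. phi e = p (src e) - p (tgt e)" "conn_rel src tgt S1 = conn_rel src tgt S2"
  shows "inter_hyp src tgt phi Q S1 = inter_hyp src tgt phi Q S2"
  using mem_inter_hyp_iff_paraboloid_lift[of S1 phi p src tgt _ Q]
    mem_inter_hyp_iff_paraboloid_lift[of S2 phi p src tgt _ Q] assms by auto

locale real_gain_graph =
  fixes E :: "'e set" and src tgt :: "'e \<Rightarrow> 'n::finite" and phi :: "'e \<Rightarrow> real"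
  assumes finite_edges: "finite E" and no_loops: "\<And>e. e \<in> E \<Longrightarrow> src e \<noteq> tgt e"
begin

definition potential :: "'e set \<Rightarrow> 'n \<Rightarrow> real" where
  "potential S = (SOME p. \<forall>e\<in>S. phi e = p (src e) - p (tgt e))"

lemma potential_balanced:
  assumes "S \<subseteq> E" "balanced src tgt phi S"
  shows "\<forall>e\<in>S. phi e = potential S (src e) - potential S (tgt e)"
proof -
  have "\<exists>p. \<forall>e\<in>S. phi e = p (src e) - p (tgt e)"
    using assms finite_subset[OF _ finite_edges] no_loops by (intro potential_if_balanced) auto
  then show ?thesis unfolding potential_def by (rule someI_ex)
qed

lemma inter_hyp_nonempty_iff:
  fixes Q :: "('a::euclidean_space)^'n"
  assumes "general_position (potential ` Pow E) Q" "S \<subseteq> E"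
  shows "inter_hyp src tgt phi Q S \<noteq> {} \<longleftrightarrow>
    balanced src tgt phi S \<and> CARD('n) - ncomp src tgt S \<le> DIM('a)"
proof
  assume ne: "inter_hyp src tgt phi Q S \<noteq> {}"
  then have bal: "balanced src tgt phi S" by (rule balanced_if_inter_hyp_nonempty)
  moreover have "potential S \<in> potential ` Pow E" using assms(2) by blast
  ultimately show "balanced src tgt phi S \<and> CARD('n) - ncomp src tgt S \<le> DIM('a)"
    using ne inter_hyp_empty_if_rank_exceeds_dim[OF assms(1) _ potential_balanced[OF assms(2) bal]]
    by (meson not_le)
next
  assume "balanced src tgt phi S \<and> CARD('n) - ncomp src tgt S \<le> DIM('a)"
  then show "inter_hyp src tgt phi Q S \<noteq> {}"
    using inter_hyp_flat_if_rank_le_dim(1)[OF assms(1) potential_balanced[OF assms(2)]] by blast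
qed

lemma inter_hyp_affine_dim:
  fixes Q :: "('a::euclidean_space)^'n"
  assumes "general_position (potential ` Pow E) Q" "S \<subseteq> E" "inter_hyp src tgt phi Q S \<noteq> {}"
  shows "affine (inter_hyp src tgt phi Q S) \<and>
    aff_dim (inter_hyp src tgt phi Q S) = int (DIM('a) - (CARD('n) - ncomp src tgt S))"
  using inter_hyp_nonempty_iff[OF assms(1,2)] assms(3)
    inter_hyp_flat_if_rank_le_dim(2,3)[OF assms(1) potential_balanced[OF assms(2)]] by blast

lemma conn_rel_eq_if_inter_hyp_eq:
  fixes Q :: "('a::euclidean_space)^'n"
  assumes Q: "general_position (potential ` Pow E) Q" and "T \<subseteq> E" "S \<subseteq> T"
    and eq: "inter_hyp src tgt phi Q S = inter_hyp src tgt phi Q T" and ne: "inter_hyp src tgt phi Q S \<noteq> {}"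
  shows "conn_rel src tgt S = conn_rel src tgt T"
proof (rule equiv_eq_if_refines_card_eq[OF equiv_conn_rel equiv_conn_rel conn_rel_mono[OF \<open>S \<subseteq> T\<close>]])
  have "S \<subseteq> E" using assms(2,3) by blast
  have "CARD('n) - ncomp src tgt S = CARD('n) - ncomp src tgt T"
    using inter_hyp_affine_dim[OF Q \<open>S \<subseteq> E\<close> ne] inter_hyp_affine_dim[OF Q \<open>T \<subseteq> E\<close>] eq ne
      inter_hyp_nonempty_iff[OF Q \<open>S \<subseteq> E\<close>] inter_hyp_nonempty_iff[OF Q \<open>T \<subseteq> E\<close>]
    by (metis diff_diff_cancel of_nat_eq_iff)
  then have "ncomp src tgt S = ncomp src tgt T" using ncomp_le_card[of src tgt] by (metis diff_diff_cancel)
  then show "card (UNIV // conn_rel src tgt S) = card (UNIV // conn_rel src tgt T)"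
    unfolding ncomp_def components_def .
qed

lemma inter_hyp_eq_iff:
  fixes Q :: "('a::euclidean_space)^'n"
  assumes Q: "general_position (potential ` Pow E) Q" and S: "S1 \<subseteq> E" "S2 \<subseteq> E"
  shows "(inter_hyp src tgt phi Q S1 = inter_hyp src tgt phi Q S2 \<and> inter_hyp src tgt phi Q S1 \<noteq> {})
    \<longleftrightarrow> (balanced src tgt phi (S1 \<union> S2) \<and> components src tgt S1 = components src tgt S2 \<and>
         ncomp src tgt S1 \<ge> CARD('n) - DIM('a))"
    (is "?L \<longleftrightarrow> ?R")
proof
  let ?X = "inter_hyp src tgt phi Q"
  assume ?L
  then have eq: "?X S2 = ?X S1" and ne: "?X S1 \<noteq> {}" and X12: "?X (S1 \<union> S2) = ?X S1"
    by (auto simp: inter_hyp_def)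
  have "conn_rel src tgt S = conn_rel src tgt (S1 \<union> S2)" if "S \<in> {S1, S2}" for S
    using that S eq ne X12 by (intro conn_rel_eq_if_inter_hyp_eq[OF Q]) auto
  then have "components src tgt S1 = components src tgt S2" unfolding components_def by simp
  moreover have "balanced src tgt phi (S1 \<union> S2)"
    using ne X12 by (intro balanced_if_inter_hyp_nonempty[of src tgt phi Q]) simp
  moreover have "ncomp src tgt S1 \<ge> CARD('n) - DIM('a)" using inter_hyp_nonempty_iff[OF Q S(1)] ne by arith
  ultimately show ?R by blast
next
  assume ?R
  then have "conn_rel src tgt S1 = conn_rel src tgt S2"
    using equiv_eq_iff_quotient_eq[OF equiv_conn_rel equiv_conn_rel] unfolding components_def by blast
  then have "inter_hyp src tgt phi Q S1 = inter_hyp src tgt phi Q S2"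
    using potential_balanced[of "S1 \<union> S2"] S \<open>?R\<close> by (intro inter_hyp_eq_if_conn_rel_eq) auto
  moreover have "inter_hyp src tgt phi Q S1 \<noteq> {}"
    using inter_hyp_nonempty_iff[OF Q S(1)] balanced_subset[of src tgt phi "S1 \<union> S2" S1] \<open>?R\<close> by auto
  ultimately show ?L by blast
qed

lemma inter_hyp_empty_or_flat:
  fixes Q :: "('a::euclidean_space)^'n"
  assumes "general_position (potential ` Pow E) Q" "S \<subseteq> E"
  shows "(\<not> balanced src tgt phi S \<or> CARD('n) - ncomp src tgt S > DIM('a)
      \<longrightarrow> inter_hyp src tgt phi Q S = {}) \<and>
    (balanced src tgt phi S \<and> CARD('n) - ncomp src tgt S \<le> DIM('a)
      \<longrightarrow> inter_hyp src tgt phi Q S \<noteq> {} \<and> affine (inter_hyp src tgt phi Q S) \<and>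
          aff_dim (inter_hyp src tgt phi Q S) = int (DIM('a) - (CARD('n) - ncomp src tgt S)))"
  using inter_hyp_nonempty_iff[OF assms] inter_hyp_affine_dim[OF assms] by auto

end

theorem theorem5p1:
  fixes E :: "'e set" and src tgt :: "'e \<Rightarrow> 'n::finite" and phi :: "'e \<Rightarrow> real"
  assumes "CARD('n) > DIM('a::euclidean_space)"
    and "finite E"
    and "\<And>e. e \<in> E \<Longrightarrow> src e \<noteq> tgt e"
  shows "\<exists>G :: ('a ^ 'n) set. open G \<and> closure G = UNIV \<and> G \<subseteq> {Q. inj (($) Q)} \<and>
    (\<forall>Q\<in>G.
      (\<forall>S\<subseteq>E.
         (\<not> balanced src tgt phi S \<or> CARD('n) - ncomp src tgt S > DIM('a)
            \<longrightarrow> inter_hyp src tgt phi Q S = {}) \<and>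
         (balanced src tgt phi S \<and> CARD('n) - ncomp src tgt S \<le> DIM('a)
            \<longrightarrow> inter_hyp src tgt phi Q S \<noteq> {} \<and> affine (inter_hyp src tgt phi Q S) \<and>
                aff_dim (inter_hyp src tgt phi Q S) = int (DIM('a) - (CARD('n) - ncomp src tgt S)))) \<and>
      (\<forall>S1\<subseteq>E. \<forall>S2\<subseteq>E.
         (inter_hyp src tgt phi Q S1 = inter_hyp src tgt phi Q S2 \<and> inter_hyp src tgt phi Q S1 \<noteq> {})
         \<longleftrightarrow> (balanced src tgt phi (S1 \<union> S2) \<and> components src tgt S1 = components src tgt S2 \<and>
              ncomp src tgt S1 \<ge> CARD('n) - DIM('a))))"
proof -
  interpret real_gain_graph E src tgt phi using assms(2,3) by unfold_locales
  define G where "G = {Q :: 'a^'n. general_position (potential ` Pow E) Q}"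
  have "open G \<and> closure G = UNIV"
    unfolding G_def by (rule open_dense_general_position) (simp add: finite_edges)
  then show ?thesis
    by (intro exI[of _ G] conjI ballI)
      (auto simp: G_def inj_if_general_position inter_hyp_empty_or_flat inter_hyp_eq_iff)
qed

end
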